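(* Let $I\subset F$ be a two-sided ideal generated by a finite set of monomials $\{v_k\}\subset W$, let $d=\max_k\deg v_k$, and $A=F/I$. Let $w\in W\setminus I$, $\Delta=\deg w$, and $\varphi:A[-\Delta]\to A$ the graded right $A$-module homomorphism $1\mapsto w+I$. Then $K=\mathrm{Ker}\,\varphi$ is a finitely generated monomial right ideal (generated by cosets of monomials), and every element of a minimal monomial basis of $K$ has degree (in the grading of $A[-\Delta]$) at most $\Delta+d-1$.
   Context: $\mathbb K$ is a field, $F=\mathbb K\langle x_1,\dots,x_n\rangle$ the free associative algebra with standard grading, $W$ its set of monomials (words). $A[-\Delta]$ denotes $A$ with grading $A[-\Delta]_e=A_{e-\Delta}$, so an element $f$ of $A$ homogeneous of degree $e$ has degree $\Delta+e$ in $A[-\Delta]$. *)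

theory Defs
  imports Main
begin

text \<open>The free associative algebra F = K<x_1..x_n> over a field 'k, with the letters
  given by a finite type 'x. Elements of F are finitely supported functions from words
  ('x list) to 'k. The monomials (words) are W = UNIV :: 'x list set.\<close>

definition FF :: "('x list \<Rightarrow> 'k::field) set" where
  "FF = {f. finite {u. f u \<noteq> 0}}"

definition wmono :: "'x list \<Rightarrow> ('x list \<Rightarrow> 'k::field)" where
  "wmono u = (\<lambda>v. if v = u then 1 else 0)"

definition fmult :: "('x list \<Rightarrow> 'k::field) \<Rightarrow> ('x list \<Rightarrow> 'k) \<Rightarrow> ('x list \<Rightarrow> 'k)" where
  "fmult f g = (\<lambda>u. \<Sum>p\<in>{p. fst p @ snd p = u}. f (fst p) * g (snd p))"

definition is_subspace :: "('x list \<Rightarrow> 'k::field) set \<Rightarrow> bool" where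
  "is_subspace S \<longleftrightarrow> S \<subseteq> FF \<and> (\<lambda>u. 0) \<in> S \<and> (\<forall>f\<in>S. \<forall>g\<in>S. (\<lambda>u. f u + g u) \<in> S)
     \<and> (\<forall>c f. f \<in> S \<longrightarrow> (\<lambda>u. c * f u) \<in> S)"

definition two_sided_ideal :: "('x list \<Rightarrow> 'k::field) set \<Rightarrow> bool" where
  "two_sided_ideal S \<longleftrightarrow> is_subspace S \<and>
     (\<forall>f\<in>S. \<forall>g\<in>FF. fmult f g \<in> S \<and> fmult g f \<in> S)"

definition right_ideal :: "('x list \<Rightarrow> 'k::field) set \<Rightarrow> bool" where
  "right_ideal S \<longleftrightarrow> is_subspace S \<and> (\<forall>f\<in>S. \<forall>g\<in>FF. fmult f g \<in> S)"

definition ideal_gen :: "('x list \<Rightarrow> 'k::field) set \<Rightarrow> ('x list \<Rightarrow> 'k) set" where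
  "ideal_gen S = \<Inter>{J. two_sided_ideal J \<and> S \<subseteq> J}"

definition right_ideal_gen :: "('x list \<Rightarrow> 'k::field) set \<Rightarrow> ('x list \<Rightarrow> 'k) set" where
  "right_ideal_gen S = \<Inter>{J. right_ideal J \<and> S \<subseteq> J}"

text \<open>Right ideals of A = F/I are identified with right ideals of F containing I
  (their preimages). The kernel of phi : A[-Delta] -> A, a + I |-> w a + I,
  has preimage {f in F. w f in I}.\<close>
definition ker_phi :: "('x list \<Rightarrow> 'k::field) set \<Rightarrow> 'x list \<Rightarrow> ('x list \<Rightarrow> 'k) set" where
  "ker_phi I w = {f \<in> FF. fmult (wmono w) f \<in> I}"

text \<open>The right ideal of A generated by the cosets u + I (u \<in> U), given by its preimage in F.\<close>
definition quot_right_gen :: "('x list \<Rightarrow> 'k::field) set \<Rightarrow> 'x list set \<Rightarrow> ('x list \<Rightarrow> 'k) set" where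
  "quot_right_gen I U = right_ideal_gen (I \<union> wmono ` U)"

definition minimal_monomial_basis ::
  "('x list \<Rightarrow> 'k::field) set \<Rightarrow> ('x list \<Rightarrow> 'k) set \<Rightarrow> 'x list set \<Rightarrow> bool" where
  "minimal_monomial_basis I K U \<longleftrightarrow> K = quot_right_gen I U \<and>
     (\<forall>U'. U' \<subset> U \<longrightarrow> K \<noteq> quot_right_gen I U')"

end

theory Submission
  imports Defs
begin

text \<open>A monomial ideal is spanned by the words it contains, so everything reduces to words.
  I is spanned by the words having some v \<in> V as a factor, and the kernel of phi by the words u
  with w u \<in> I. If w u has a factor v \<in> V while neither w nor u has one, that occurrence of v
  straddles the junction, so a prefix t of u with |t| < |v| \<le> d already has w t \<in> I. Hence
  the kernel is generated by its words of length < d, and a generator of length \<ge> d is a right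
  multiple of another generator (or lies in I), so it cannot occur in a minimal basis.\<close>

subsection \<open>Sets of words\<close>

definition superwords :: "'x list set \<Rightarrow> 'x list set" where
  "superwords V = {a @ v @ b | a v b. v \<in> V}"

definition right_multiples :: "'x list set \<Rightarrow> 'x list set" where
  "right_multiples U = {u @ x | u x. u \<in> U}"

definition right_closed :: "'x list set \<Rightarrow> bool" where
  "right_closed P \<longleftrightarrow> (\<forall>u\<in>P. \<forall>x. u @ x \<in> P)"

lemma right_multiplesI: "u \<in> U \<Longrightarrow> u @ x \<in> right_multiples U"
  unfolding right_multiples_def by blast

lemma right_multiplesE:
  assumes "z \<in> right_multiples U"
  obtains u x where "u \<in> U" "z = u @ x"
  using assms unfolding right_multiples_def by blast

lemma right_multiples_mono: "U \<subseteq> U' \<Longrightarrow> right_multiples U \<subseteq> right_multiples U'"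
  unfolding right_multiples_def by blast

lemma subset_right_multiples: "U \<subseteq> right_multiples U"
  using right_multiplesI[of _ U "[]"] by auto

lemma right_closed_Un_right_multiples:
  assumes "right_closed P"
  shows "right_closed (P \<union> right_multiples U)"
  unfolding right_closed_def
proof (intro ballI allI)
  fix z x assume "z \<in> P \<union> right_multiples U"
  then show "z @ x \<in> P \<union> right_multiples U"
  proof
    assume "z \<in> P"
    then show ?thesis using assms unfolding right_closed_def by blast
  next
    assume "z \<in> right_multiples U"
    then obtain u y where "u \<in> U" "z = u @ y" by (rule right_multiplesE)
    then show ?thesis using right_multiplesI[of u U "y @ x"] by simp
  qed
qed

lemma superwordsI: "v \<in> V \<Longrightarrow> a @ v @ b \<in> superwords V"
  unfolding superwords_def by blast

lemma superwordsE:
  assumes "u \<in> superwords V"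
  obtains a v b where "v \<in> V" "u = a @ v @ b"
  using assms unfolding superwords_def by blast

lemma subset_superwords: "V \<subseteq> superwords V"
  using superwordsI[of _ V "[]" "[]"] by (simp add: subset_iff)

lemma superwords_append:
  assumes "u \<in> superwords V"
  shows "y @ u @ x \<in> superwords V"
proof -
  from assms obtain a v b where "v \<in> V" "u = a @ v @ b" by (rule superwordsE)
  then show ?thesis using superwordsI[of v V "y @ a" "b @ x"] by simp
qed

lemma superwords_append_right: "u \<in> superwords V \<Longrightarrow> u @ x \<in> superwords V"
  using superwords_append[of u V "[]"] by simp

lemma superwords_append_left: "u \<in> superwords V \<Longrightarrow> x @ u \<in> superwords V"
  using superwords_append[of u V x "[]"] by simp

lemma right_closed_superwords: "right_closed (superwords V)"
  unfolding right_closed_def using superwords_append_right by blast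

lemma straddling_occurrence:
  assumes "w \<notin> superwords V" "u \<notin> superwords V" "w @ u \<in> superwords V"
  obtains v t x where "v \<in> V" "u = t @ x" "length t < length v" "w @ t \<in> superwords V"
proof -
  from assms(3) obtain a v b where v: "v \<in> V" and split: "w @ u = a @ v @ b"
    by (rule superwordsE)
  have "length w + length u = length a + length v + length b"
    using arg_cong[OF split, of length] by simp
  consider "length a + length v \<le> length w" | "length w \<le> length a"
    | "length a < length w" "length w < length a + length v" by linarith
  then show ?thesis
  proof cases
    case 1
    have "take (length w) (w @ u) = take (length w) (a @ v @ b)" using split by simp
    then have "w = a @ v @ take (length w - length a - length v) b"
      using 1 by (simp add: take_append)
    then show ?thesis using assms(1) superwordsI[OF v] by metis
  next
    case 2
    have "drop (length w) (w @ u) = drop (length w) (a @ v @ b)" using split by simp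
    then have "u = drop (length w) a @ v @ b" using 2 by simp
    then show ?thesis using assms(2) superwordsI[OF v] by metis
  next
    case 3
    define n where "n = length a + length v - length w"
    have "take (length a + length v) (w @ u) = take (length a + length v) (a @ v @ b)"
      using split by simp
    then have "w @ take n u = a @ v @ []" using 3 unfolding n_def by (simp add: take_append)
    then have "w @ take n u \<in> superwords V" using superwordsI[OF v] by metis
    moreover have "length (take n u) < length v" using 3 unfolding n_def by simp
    ultimately show ?thesis using that[of v "take n u" "drop n u"] v by simp
  qed
qed

lemma short_prefix_in_left_quotient:
  assumes "w \<notin> superwords V" "\<forall>v\<in>V. length v \<le> d"
    and "w @ u \<in> superwords V" "u \<notin> superwords V"
  shows "\<exists>t x. u = t @ x \<and> length t < d \<and> w @ t \<in> superwords V"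
proof -
  obtain v t x where "v \<in> V" "u = t @ x" "length t < length v" "w @ t \<in> superwords V"
    using straddling_occurrence[of w V u] assms by blast
  with assms(2) show ?thesis by fastforce
qed

lemma right_closed_left_quotient: "right_closed P \<Longrightarrow> right_closed {u. w @ u \<in> P}"
  unfolding right_closed_def by (metis append_assoc mem_Collect_eq)

lemma generated_by_short_words:
  assumes "right_closed Q" "P \<subseteq> Q"
    and short: "\<And>u. u \<in> Q \<Longrightarrow> u \<notin> P \<Longrightarrow> \<exists>t x. u = t @ x \<and> length t < d \<and> t \<in> Q"
  shows "Q = P \<union> right_multiples {u \<in> Q. length u < d}"
proof
  show "Q \<subseteq> P \<union> right_multiples {u \<in> Q. length u < d}"
  proof
    fix u assume "u \<in> Q"
    show "u \<in> P \<union> right_multiples {u \<in> Q. length u < d}"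
    proof (cases "u \<in> P")
      case False
      then obtain t x where "u = t @ x" "length t < d" "t \<in> Q" using short \<open>u \<in> Q\<close> by blast
      then show ?thesis using right_multiplesI[of t "{u \<in> Q. length u < d}" x] by simp
    qed simp
  qed
  show "P \<union> right_multiples {u \<in> Q. length u < d} \<subseteq> Q"
    using assms(1,2) unfolding right_closed_def by (auto elim!: right_multiplesE)
qed

lemma right_multiples_remove_redundant:
  assumes P: "right_closed P" and u: "u \<in> P \<union> right_multiples (U - {u})"
  shows "P \<union> right_multiples U = P \<union> right_multiples (U - {u})"
proof
  have "z \<in> P \<union> right_multiples (U - {u})" if "z \<in> right_multiples U" for z
  proof -
    from that obtain u' x where u': "u' \<in> U" "z = u' @ x" by (rule right_multiplesE)
    show ?thesis
    proof (cases "u' = u")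
      case True
      then show ?thesis
        using u u'(2) right_closed_Un_right_multiples[OF P, of "U - {u}"]
        unfolding right_closed_def by blast
    next
      case False
      then show ?thesis using u' right_multiplesI[of u' "U - {u}" x] by simp
    qed
  qed
  then show "P \<union> right_multiples U \<subseteq> P \<union> right_multiples (U - {u})" by blast
  show "P \<union> right_multiples (U - {u}) \<subseteq> P \<union> right_multiples U"
    using right_multiples_mono[of "U - {u}" U] by blast
qed

lemma minimal_generators_short:
  assumes P: "right_closed P" and Q: "Q = P \<union> right_multiples U"
    and minimal: "\<And>U'. U' \<subset> U \<Longrightarrow> P \<union> right_multiples U' \<noteq> Q"
    and short: "\<And>u. u \<in> Q \<Longrightarrow> u \<notin> P \<Longrightarrow> \<exists>t x. u = t @ x \<and> length t < d \<and> t \<in> Q"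
    and u: "u \<in> U"
  shows "length u < d"
proof (rule ccontr)
  assume long: "\<not> length u < d"
  have "u \<in> P \<union> right_multiples (U - {u})"
  proof (cases "u \<in> P")
    case False
    have "u \<in> Q" using Q u subset_right_multiples by blast
    then obtain t x where t: "u = t @ x" "length t < d" "t \<in> Q" using short[OF _ False] by blast
    then have "t \<notin> P" using False P unfolding right_closed_def by blast
    then have "t \<in> right_multiples U" using t(3) Q by blast
    then obtain u' y where u': "u' \<in> U" "t = u' @ y" by (rule right_multiplesE)
    moreover have "u' \<noteq> u"
    proof
      assume "u' = u"
      then have "length u \<le> length t" using u'(2) by simp
      then show False using t(2) long by linarith
    qed
    ultimately show ?thesis using t(1) right_multiplesI[of u' "U - {u}" "y @ x"] by simp
  qed simp
  then have "P \<union> right_multiples (U - {u}) = Q"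
    unfolding Q by (rule right_multiples_remove_redundant[OF P, symmetric])
  moreover have "U - {u} \<subset> U" using u by auto
  ultimately show False using minimal[of "U - {u}"] by blast
qed

subsection \<open>Products of finitely supported functions\<close>

lemma finite_factorizations: "finite {p. fst p @ snd p = (z::'x list)}"
proof -
  have "{p. fst p @ snd p = z} = (\<lambda>i. (take i z, drop i z)) ` {..length z}"
  proof (rule set_eqI, rule iffI)
    fix p assume "p \<in> {p. fst p @ snd p = z}"
    then show "p \<in> (\<lambda>i. (take i z, drop i z)) ` {..length z}"
      by (intro image_eqI[where x="length (fst p)"]) auto
  qed auto
  then show ?thesis by simp
qed

lemma fmult_nonzero_factorization:
  assumes "fmult f g z \<noteq> 0"
  obtains a b where "z = a @ b" "f a \<noteq> 0" "g b \<noteq> 0"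
proof -
  from assms obtain p where "p \<in> {p. fst p @ snd p = z}" "f (fst p) * g (snd p) \<noteq> 0"
    unfolding fmult_def by (meson sum.not_neutral_contains_not_neutral)
  then show ?thesis using that by auto
qed

lemma wmono_FF: "wmono u \<in> FF"
  unfolding FF_def wmono_def by simp

lemma fmult_FF:
  assumes "f \<in> FF" "g \<in> FF"
  shows "fmult f g \<in> FF"
proof -
  let ?A = "{u. f u \<noteq> 0}" and ?B = "{u. g u \<noteq> 0}"
  have "{z. fmult f g z \<noteq> 0} \<subseteq> (\<lambda>(a, b). a @ b) ` (?A \<times> ?B)"
    by (auto elim!: fmult_nonzero_factorization)
  moreover have "finite ((\<lambda>(a, b). a @ b) ` (?A \<times> ?B))"
    using assms unfolding FF_def by simp
  ultimately show ?thesis unfolding FF_def by (auto intro: finite_subset)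
qed

lemma fmult_wmono_wmono: "fmult (wmono a) (wmono b) = (wmono (a @ b) :: 'x list \<Rightarrow> 'k::field)"
proof
  fix z :: "'x list"
  let ?S = "{p. fst p @ snd p = z}"
  have "fmult (wmono a) (wmono b) z = (\<Sum>p\<in>?S. if p = (a, b) then 1 else 0)"
    unfolding fmult_def wmono_def by (rule sum.cong) (auto simp: prod_eq_iff)
  also have "\<dots> = wmono (a @ b) z"
    using finite_factorizations[of z] unfolding wmono_def by auto
  finally show "fmult (wmono a) (wmono b) z = wmono (a @ b) z" .
qed

lemma fmult_wmono_left_append: "fmult (wmono w) f (w @ u) = f u"
proof -
  let ?S = "{p. fst p @ snd p = w @ u}"
  have "fmult (wmono w) f (w @ u) = (\<Sum>p\<in>?S. if p = (w, u) then f u else 0)"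
    unfolding fmult_def wmono_def by (rule sum.cong) (auto simp: prod_eq_iff)
  also have "\<dots> = f u"
    using finite_factorizations[of "w @ u"] by simp
  finally show ?thesis .
qed

subsection \<open>Subspaces spanned by words\<close>

definition monomial_span :: "'x list set \<Rightarrow> ('x list \<Rightarrow> 'k::field) set" where
  "monomial_span P = {f \<in> FF. \<forall>u. f u \<noteq> 0 \<longrightarrow> u \<in> P}"

lemma wmono_in_monomial_span_iff:
  "(wmono u :: 'x list \<Rightarrow> 'k::field) \<in> monomial_span P \<longleftrightarrow> u \<in> P"
  unfolding monomial_span_def wmono_def FF_def by auto

lemma monomial_span_mono: "P \<subseteq> Q \<Longrightarrow> monomial_span P \<subseteq> monomial_span Q"
  unfolding monomial_span_def by blast

lemma monomial_span_inj:
  assumes "(monomial_span P :: ('x list \<Rightarrow> 'k::field) set) = monomial_span Q"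
  shows "P = Q"
  using wmono_in_monomial_span_iff[where 'k='k, of _ P] wmono_in_monomial_span_iff[where 'k='k, of _ Q]
    assms by blast

lemma monomial_span_subspace: "is_subspace (monomial_span P :: ('x list \<Rightarrow> 'k::field) set)"
proof -
  have "(\<lambda>u. f u + g u) \<in> monomial_span P"
    if "f \<in> monomial_span P" "g \<in> monomial_span P" for f g :: "'x list \<Rightarrow> 'k"
  proof -
    have "{u. f u + g u \<noteq> 0} \<subseteq> {u. f u \<noteq> 0} \<union> {u. g u \<noteq> 0}" by auto
    with that show ?thesis
      unfolding monomial_span_def FF_def by (auto intro: finite_subset)
  qed
  moreover have "(\<lambda>u. c * f u) \<in> monomial_span P" if "f \<in> monomial_span P" for f :: "'x list \<Rightarrow> 'k" and c
  proof -
    have "{u. c * f u \<noteq> 0} \<subseteq> {u. f u \<noteq> 0}" by auto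
    with that show ?thesis
      unfolding monomial_span_def FF_def by (auto intro: finite_subset)
  qed
  moreover have "monomial_span P \<subseteq> FF" "(\<lambda>u. 0) \<in> monomial_span P"
    unfolding monomial_span_def FF_def by auto
  ultimately show ?thesis unfolding is_subspace_def by blast
qed

lemma subspace_sum_wmono:
  fixes J :: "('x list \<Rightarrow> 'k::field) set"
  assumes "is_subspace J" "finite S" "\<forall>u\<in>S. wmono u \<in> J"
  shows "(\<lambda>v. \<Sum>u\<in>S. c u * wmono u v) \<in> J"
  using assms(2,3)
proof (induction S rule: finite_induct)
  case empty
  then show ?case using assms(1) unfolding is_subspace_def by simp
next
  case (insert x S)
  have "(\<lambda>v. c x * wmono x v) \<in> J" "(\<lambda>v. \<Sum>u\<in>S. c u * wmono u v) \<in> J"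
    using insert assms(1) unfolding is_subspace_def by simp_all
  then show ?case
    using insert(1,2) assms(1) unfolding is_subspace_def by simp
qed

lemma monomial_span_subset:
  fixes J :: "('x list \<Rightarrow> 'k::field) set"
  assumes "is_subspace J" "\<forall>u\<in>P. wmono u \<in> J"
  shows "monomial_span P \<subseteq> J"
proof
  fix f :: "'x list \<Rightarrow> 'k" assume f: "f \<in> monomial_span P"
  let ?S = "{u. f u \<noteq> 0}"
  have fin: "finite ?S" using f unfolding monomial_span_def FF_def by simp
  have "f = (\<lambda>v. \<Sum>u\<in>?S. f u * wmono u v)"
  proof
    fix v
    have "(\<Sum>u\<in>?S. f u * wmono u v) = (\<Sum>u\<in>?S. if u = v then f v else 0)"
      unfolding wmono_def by (intro sum.cong refl) simp
    also have "\<dots> = f v" using fin by simp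
    finally show "f v = (\<Sum>u\<in>?S. f u * wmono u v)" by simp
  qed
  also have "\<dots> \<in> J"
    using f assms fin unfolding monomial_span_def by (intro subspace_sum_wmono) auto
  finally show "f \<in> J" .
qed

lemma fmult_monomial_span_right:
  assumes "right_closed P" "f \<in> monomial_span P" "g \<in> FF"
  shows "fmult f g \<in> monomial_span P"
  using assms fmult_FF[of f g]
  unfolding monomial_span_def right_closed_def by (auto elim!: fmult_nonzero_factorization)

lemma fmult_monomial_span_left:
  assumes "\<forall>u\<in>P. \<forall>x. x @ u \<in> P" "f \<in> monomial_span P" "g \<in> FF"
  shows "fmult g f \<in> monomial_span P"
  using assms fmult_FF[of g f]
  unfolding monomial_span_def by (auto elim!: fmult_nonzero_factorization)

subsection \<open>Monomial ideals\<close>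

lemma ideal_gen_wmono:
  "ideal_gen (wmono ` V) = (monomial_span (superwords V) :: ('x list \<Rightarrow> 'k::field) set)"
proof
  have "two_sided_ideal (monomial_span (superwords V) :: ('x list \<Rightarrow> 'k) set)"
    unfolding two_sided_ideal_def
    using monomial_span_subspace fmult_monomial_span_right[OF right_closed_superwords]
      fmult_monomial_span_left[of "superwords V"] superwords_append_left by blast
  then show "ideal_gen (wmono ` V) \<subseteq> (monomial_span (superwords V) :: ('x list \<Rightarrow> 'k) set)"
    unfolding ideal_gen_def using subset_superwords[of V]
    by (intro Inter_lower) (auto simp: wmono_in_monomial_span_iff)
next
  show "monomial_span (superwords V) \<subseteq> (ideal_gen (wmono ` V) :: ('x list \<Rightarrow> 'k) set)"
    unfolding ideal_gen_def
  proof (rule Inter_greatest)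
    fix J :: "('x list \<Rightarrow> 'k) set" assume "J \<in> {J. two_sided_ideal J \<and> wmono ` V \<subseteq> J}"
    then have J: "two_sided_ideal J" "wmono ` V \<subseteq> J" by auto
    have "wmono (a @ v @ b) \<in> J" if "v \<in> V" for a v b
    proof -
      have "fmult (fmult (wmono a) (wmono v)) (wmono b) \<in> J"
        using J that wmono_FF unfolding two_sided_ideal_def by blast
      then show ?thesis by (simp add: fmult_wmono_wmono)
    qed
    then show "monomial_span (superwords V) \<subseteq> J"
      using J(1) unfolding two_sided_ideal_def
      by (intro monomial_span_subset) (auto elim: superwordsE)
  qed
qed

lemma quot_right_gen_monomial_span:
  fixes I :: "('x list \<Rightarrow> 'k::field) set"
  assumes I: "I = monomial_span P" and P: "right_closed P"
  shows "quot_right_gen I U = monomial_span (P \<union> right_multiples U)"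
proof
  have "right_ideal (monomial_span (P \<union> right_multiples U) :: ('x list \<Rightarrow> 'k) set)"
    unfolding right_ideal_def
    using monomial_span_subspace fmult_monomial_span_right right_closed_Un_right_multiples[OF P]
    by blast
  moreover have "I \<subseteq> monomial_span (P \<union> right_multiples U)"
    unfolding I by (rule monomial_span_mono) blast
  moreover have "wmono ` U \<subseteq> (monomial_span (P \<union> right_multiples U) :: ('x list \<Rightarrow> 'k) set)"
    using subset_right_multiples[of U] by (auto simp: wmono_in_monomial_span_iff)
  ultimately show "quot_right_gen I U \<subseteq> monomial_span (P \<union> right_multiples U)"
    unfolding quot_right_gen_def right_ideal_gen_def by (intro Inter_lower) simp
next
  show "monomial_span (P \<union> right_multiples U) \<subseteq> quot_right_gen I U"
    unfolding quot_right_gen_def right_ideal_gen_def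
  proof (rule Inter_greatest)
    fix J :: "('x list \<Rightarrow> 'k) set" assume "J \<in> {J. right_ideal J \<and> I \<union> wmono ` U \<subseteq> J}"
    then have J: "right_ideal J" "I \<subseteq> J" "wmono ` U \<subseteq> J" by auto
    have "wmono (u @ x) \<in> J" if "u \<in> U" for u x
    proof -
      have "fmult (wmono u) (wmono x) \<in> J"
        using J that wmono_FF unfolding right_ideal_def by blast
      then show ?thesis by (simp add: fmult_wmono_wmono)
    qed
    moreover have "wmono u \<in> J" if "u \<in> P" for u
      using J(2) that I wmono_in_monomial_span_iff by blast
    ultimately show "monomial_span (P \<union> right_multiples U) \<subseteq> J"
      using J(1) unfolding right_ideal_def
      by (intro monomial_span_subset) (auto elim: right_multiplesE)
  qed
qed

lemma ker_phi_monomial_span: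
  "ker_phi (monomial_span P) w = (monomial_span {u. w @ u \<in> P} :: ('x list \<Rightarrow> 'k::field) set)"
proof (rule set_eqI, rule iffI)
  fix f :: "'x list \<Rightarrow> 'k" assume "f \<in> ker_phi (monomial_span P) w"
  then show "f \<in> monomial_span {u. w @ u \<in> P}"
    unfolding ker_phi_def monomial_span_def by (auto simp: fmult_wmono_left_append)
next
  fix f :: "'x list \<Rightarrow> 'k" assume f: "f \<in> monomial_span {u. w @ u \<in> P}"
  have "z \<in> P" if "fmult (wmono w) f z \<noteq> 0" for z
  proof -
    from that obtain a b where "z = a @ b" "wmono w a \<noteq> (0::'k)" "f b \<noteq> 0"
      by (rule fmult_nonzero_factorization)
    then show ?thesis using f unfolding monomial_span_def wmono_def by (auto split: if_splits)
  qed
  moreover have "f \<in> FF" using f unfolding monomial_span_def by blast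
  ultimately show "f \<in> ker_phi (monomial_span P) w"
    unfolding ker_phi_def monomial_span_def using fmult_FF wmono_FF by blast
qed

theorem mainTheorem14:
  fixes V :: "('x::finite) list set" and w :: "'x list"
    and I :: "('x list \<Rightarrow> 'k::field) set" and d :: nat and K :: "('x list \<Rightarrow> 'k) set"
  assumes "finite V" and "V \<noteq> {}"
    and I_def: "I = ideal_gen (wmono ` V)"
    and d_def: "d = Max (length ` V)"
    and "wmono w \<notin> I"
    and K_def: "K = ker_phi I w"
  shows "(\<exists>U. finite U \<and> K = quot_right_gen I U)
       \<and> (\<forall>U. minimal_monomial_basis I K U \<longrightarrow>
              (\<forall>u\<in>U. length w + length u \<le> length w + d - 1))"
proof -
  define P where "P = superwords V"
  define Q where "Q = {u. w @ u \<in> P}"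
  have I: "I = monomial_span P" using I_def ideal_gen_wmono P_def by blast
  have K: "K = monomial_span Q" using K_def I ker_phi_monomial_span Q_def by blast
  have P_closed: "right_closed P" unfolding P_def by (rule right_closed_superwords)
  have gen: "quot_right_gen I U = monomial_span (P \<union> right_multiples U)" for U
    using quot_right_gen_monomial_span[OF I P_closed] .
  have short: "\<exists>t x. u = t @ x \<and> length t < d \<and> t \<in> Q" if "u \<in> Q" "u \<notin> P" for u
    using short_prefix_in_left_quotient[of w V d u] that assms(1,5) I d_def
    by (simp add: Q_def P_def wmono_in_monomial_span_iff)
  have "right_closed Q" unfolding Q_def using P_closed by (rule right_closed_left_quotient)
  moreover have "P \<subseteq> Q" unfolding Q_def P_def using superwords_append_left by blast
  ultimately have "Q = P \<union> right_multiples {u \<in> Q. length u < d}"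
    using short by (rule generated_by_short_words)
  moreover have "finite {u \<in> Q. length u < d}"
    by (rule finite_subset[OF _ finite_lists_length_le[of UNIV d]]) auto
  moreover have "length u < d" if "minimal_monomial_basis I K U" "u \<in> U" for U u
    using that unfolding minimal_monomial_basis_def K gen
    by (intro minimal_generators_short[OF P_closed _ _ short]) (auto dest: monomial_span_inj)
  ultimately show ?thesis using K gen by fastforce
qed

end
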